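(* Let $g \geq 1$, let $B(g)$ be the set of binary strings $b=(b_1,\dots,b_{2g})$ of length $2g$ with $b_i \neq b_{i+g}$ for $1 \le i \le g$, and let $E'(g)$ be the set of orbits of $B(g)$ under cyclic shifts whose elements have period $2g$. Then \[ |E'(g)| = \frac{P(2g)}{2g} = \frac{1}{2g} \sum_{\substack{x\mid g \\ x \text{ odd}}} \mu(x)\,2^{g/x}, \] where $P(2g)$ is the number of elements of $B(g)$ of period $2g$.
   Context: The cyclic group of order $2g$ acts on binary strings of length $2g$ by cyclic shifts, preserving $B(g)$. The period of a binary string is the smallest positive integer $k$ such that the string is fixed by the cyclic shift by $k$; period is constant on orbits. $\mu$ is the Möbius function. (Elements of $B(g)$ encode CM types of a cyclic CM field of degree $2g$; the orbits of period $2g$ are exactly the equivalence classes of primitive CM types.) *)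

theory Defs
  imports Complex_Main "HOL-Computational_Algebra.Computational_Algebra"
begin

definition moebius :: "nat \<Rightarrow> int" where
  "moebius n = (if n = 0 then 0 else if squarefree n then (-1) ^ card (prime_factors n) else 0)"

text \<open>Binary strings of length 2g with b_i \<noteq> b_(i+g) (0-indexed).\<close>
definition Bstr :: "nat \<Rightarrow> bool list set" where
  "Bstr g = {b. length b = 2 * g \<and> (\<forall>i<g. b ! i \<noteq> b ! (i + g))}"

definition period :: "bool list \<Rightarrow> nat" where
  "period b = (LEAST k. 0 < k \<and> rotate k b = b)"

definition cyc_orbit :: "bool list \<Rightarrow> bool list set" where
  "cyc_orbit b = {rotate k b | k. True}"

definition Eprime :: "nat \<Rightarrow> bool list set set" where
  "Eprime g = {cyc_orbit b | b. b \<in> Bstr g \<and> period b = 2 * g}"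

definition Pcount :: "nat \<Rightarrow> nat" where
  "Pcount g = card {b \<in> Bstr g. period b = 2 * g}"

end

theory Submission
  imports Defs
begin

text \<open>
  A string b lies in B(g) exactly when it has length 2g and rotating it by g negates it.
  For d dividing 2g, count the strings of B(g) fixed by the shift 2g/d. If d is even, the
  shift divides g, so such a string would equal its own negation: there are none. If
  d = 2q + 1 is odd, then g = q (2g/d) + g/d, and the condition collapses to "rotating by
  g/d negates b"; such strings are freely determined by their first g/d bits, so there are
  2^(g/d) of them. A string is fixed by the shift k iff its period divides k, so Moebius
  inversion over the divisors of 2g turns these counts into P(2g). Finally, the orbit of a
  string of period 2g has exactly 2g elements, and these orbits partition the strings of
  period 2g, whence |E'(g)| = P(2g)/(2g).
\<close>

section \<open>Moebius inversion\<close>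

lemma moebius_prime_mult:
  assumes p: "prime (p::nat)" and e: "e > 0"
  shows "moebius (p * e) = (if p dvd e then 0 else - moebius e)"
proof (cases "p dvd e")
  case True
  then have "p\<^sup>2 dvd p * e" by (simp add: power2_eq_square)
  then have "\<not> squarefree (p * e)"
    using p unfolding squarefree_def by (metis not_prime_unit)
  with True show ?thesis by (simp add: moebius_def)
next
  case False
  then have "coprime p e" using p by (simp add: prime_imp_coprime)
  then have "squarefree (p * e) \<longleftrightarrow> squarefree e"
    using squarefree_mult_coprime squarefree_prime[OF p] squarefree_multD by blast
  moreover have "prime_factors (p * e) = insert p (prime_factors e)"
    using p e by (auto simp: prime_factors_product prime_prime_factors)
  moreover have "p \<notin> prime_factors e" using False by auto
  ultimately show ?thesis using False p e by (simp add: moebius_def)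
qed

lemma sum_moebius_divisors:
  assumes n: "n > 0"
  shows "(\<Sum>d\<in>{d. d dvd n}. moebius d) = (if n = 1 then 1 else 0)"
proof (cases "n = 1")
  case True
  then show ?thesis by (simp add: moebius_def)
next
  case False
  then obtain p where p: "prime p" "p dvd n" using n prime_factor_nat by blast
  define m where "m = n div p"
  have n_eq: "n = p * m" using p(2) by (simp add: m_def)
  have m: "m > 0" using n n_eq by simp
  define A where "A = {d. d dvd n \<and> \<not> p dvd d}"
  have "e dvd p * m \<longleftrightarrow> e dvd m" if "\<not> p dvd e" for e
  proof -
    have "coprime e p" using prime_imp_coprime[OF p(1) that] by (simp add: coprime_commute)
    then show ?thesis by (rule coprime_dvd_mult_right_iff)
  qed
  then have A_eq: "A = {e. e dvd m \<and> \<not> p dvd e}"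
    by (auto simp: A_def n_eq)
  have "d \<in> (\<lambda>e. p * e) ` {e. e dvd m}" if "d dvd n" "p dvd d" for d
    using that p(1) by (auto simp: n_eq prime_gt_0_nat elim!: dvdE)
  then have divisors: "{d. d dvd n} = A \<union> (\<lambda>e. p * e) ` {e. e dvd m}"
    by (auto simp: A_def n_eq)
  have "(\<Sum>d\<in>(\<lambda>e. p * e) ` {e. e dvd m}. moebius d) = (\<Sum>e\<in>{e. e dvd m}. moebius (p * e))"
    using p(1) by (intro sum.reindex[unfolded comp_def]) (simp add: inj_on_def prime_gt_0_nat)
  also have "\<dots> = (\<Sum>e\<in>{e. e dvd m}. if \<not> p dvd e then - moebius e else 0)"
    using m by (intro sum.cong refl) (auto simp: moebius_prime_mult[OF p(1)] intro: gr0I)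
  also have "\<dots> = - sum moebius A"
    using m by (simp add: sum.inter_filter[symmetric] sum_negf A_eq)
  finally show ?thesis
    using n m False by (subst divisors, subst sum.union_disjoint) (auto simp: A_def)
qed

lemma sum_divisors_swap:
  fixes n :: nat
  assumes n: "n > 0"
  shows "(\<Sum>d\<in>{d. d dvd n}. \<Sum>e\<in>{e. e dvd n div d}. f d e)
       = (\<Sum>e\<in>{e. e dvd n}. \<Sum>d\<in>{d. d dvd n div e}. f d e)"
proof -
  define D where "D = {d. d dvd n}"
  have finite_D: "finite D" using n by (simp add: D_def)
  have cofactor: "{e. e dvd n div d} = {e. e \<in> D \<and> d * e dvd n}" if "d \<in> D" for d
    using that n by (auto simp: D_def dvd_div_iff_mult mult.commute intro: dvd_mult_left)
  have "(\<Sum>d\<in>D. \<Sum>e\<in>{e. e dvd n div d}. f d e) = (\<Sum>d\<in>D. \<Sum>e\<in>{e. e \<in> D \<and> d * e dvd n}. f d e)"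
    by (intro sum.cong refl) (simp add: cofactor)
  also have "\<dots> = (\<Sum>e\<in>D. \<Sum>d\<in>{d. d \<in> D \<and> d * e dvd n}. f d e)"
    by (rule sum.swap_restrict[OF finite_D finite_D])
  also have "\<dots> = (\<Sum>e\<in>D. \<Sum>d\<in>{d. d dvd n div e}. f d e)"
    by (intro sum.cong refl) (simp add: cofactor mult.commute)
  finally show ?thesis by (simp add: D_def)
qed

lemma moebius_inversion:
  fixes N F :: "nat \<Rightarrow> 'a :: comm_ring_1"
  assumes n: "n > 0" and F: "\<And>k. k dvd n \<Longrightarrow> F k = (\<Sum>e\<in>{e. e dvd k}. N e)"
  shows "N n = (\<Sum>d\<in>{d. d dvd n}. of_int (moebius d) * F (n div d))"
proof -
  have "(\<Sum>d\<in>{d. d dvd n}. of_int (moebius d) * F (n div d))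
      = (\<Sum>d\<in>{d. d dvd n}. \<Sum>e\<in>{e. e dvd n div d}. of_int (moebius d) * N e)"
    by (intro sum.cong refl) (auto simp: F sum_distrib_left elim!: dvdE)
  also have "\<dots> = (\<Sum>e\<in>{e. e dvd n}. \<Sum>d\<in>{d. d dvd n div e}. of_int (moebius d) * N e)"
    by (rule sum_divisors_swap[OF n])
  also have "\<dots> = (\<Sum>e\<in>{e. e dvd n}. of_int (\<Sum>d\<in>{d. d dvd n div e}. moebius d) * N e)"
    by (simp add: sum_distrib_right)
  also have "\<dots> = (\<Sum>e\<in>{e. e dvd n}. if e = n then N e else 0)"
  proof (intro sum.cong refl)
    fix e assume "e \<in> {e. e dvd n}"
    then have "n div e > 0" and "n div e = 1 \<longleftrightarrow> e = n"
      using n by (auto elim!: dvdE)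
    then show "of_int (\<Sum>d\<in>{d. d dvd n div e}. moebius d) * N e = (if e = n then N e else 0)"
      by (simp add: sum_moebius_divisors)
  qed
  also have "\<dots> = N n" using n by simp
  finally show ?thesis ..
qed

section \<open>Rotations, periods and orbits\<close>

lemma inj_rotate: "inj (rotate n)"
  by (simp add: rotate_def inj_rotate1)

lemma rotate_mult_fixed:
  assumes "rotate k xs = xs"
  shows "rotate (q * k) xs = xs"
proof (induction q)
  case (Suc q)
  then show ?case using assms by (metis rotate_rotate mult_Suc)
qed simp

lemma
  assumes "xs \<noteq> []"
  shows period_pos: "0 < period xs" and rotate_period: "rotate (period xs) xs = xs"
proof -
  have "0 < length xs \<and> rotate (length xs) xs = xs" using assms by simp
  then have "0 < period xs \<and> rotate (period xs) xs = xs"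
    unfolding period_def by (rule LeastI)
  then show "0 < period xs" "rotate (period xs) xs = xs" by auto
qed

lemma rotate_eq_self_iff_period_dvd:
  assumes xs: "xs \<noteq> []"
  shows "rotate k xs = xs \<longleftrightarrow> period xs dvd k"
proof
  assume "period xs dvd k"
  then show "rotate k xs = xs"
    using rotate_mult_fixed[OF rotate_period[OF xs]] by (auto elim!: dvdE simp: mult.commute)
next
  assume k: "rotate k xs = xs"
  define p where "p = period xs"
  have "rotate (k mod p) (rotate (k div p * p) xs) = xs"
    using k by (simp add: rotate_rotate)
  then have fixed: "rotate (k mod p) xs = xs"
    using rotate_mult_fixed[OF rotate_period[OF xs]] by (simp add: p_def)
  show "p dvd k"
  proof (rule ccontr)
    assume "\<not> p dvd k"
    then have "0 < k mod p" by (simp add: dvd_eq_mod_eq_0)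
    then have "period xs \<le> k mod p"
      using fixed unfolding period_def by (intro Least_le) simp
    then show False using mod_less_divisor[OF period_pos[OF xs], of k] by (simp add: p_def)
  qed
qed

lemma period_rotate: "period (rotate j xs) = period xs"
proof -
  have "rotate k (rotate j xs) = rotate j xs \<longleftrightarrow> rotate k xs = xs" for k
    using inj_eq[OF inj_rotate, of j "rotate k xs" xs] by (simp add: rotate_rotate add.commute)
  then show ?thesis unfolding period_def by simp
qed

lemma rotate_in_cyc_orbit: "rotate k xs \<in> cyc_orbit xs"
  by (auto simp: cyc_orbit_def)

lemma self_in_cyc_orbit: "xs \<in> cyc_orbit xs"
  using rotate_in_cyc_orbit[of 0 xs] by simp

lemma cyc_orbit_rotate_subset: "cyc_orbit (rotate k xs) \<subseteq> cyc_orbit xs"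
  by (auto simp: cyc_orbit_def rotate_rotate)

lemma cyc_orbit_rotate: "cyc_orbit (rotate k xs) = cyc_orbit xs"
proof
  have "rotate (k * (length xs - 1)) (rotate k xs) = rotate (k * length xs) xs"
    by (cases xs) (simp_all add: rotate_rotate algebra_simps)
  also have "\<dots> = xs" by simp
  finally have "cyc_orbit xs = cyc_orbit (rotate (k * (length xs - 1)) (rotate k xs))" by simp
  then show "cyc_orbit xs \<subseteq> cyc_orbit (rotate k xs)"
    using cyc_orbit_rotate_subset by metis
qed (rule cyc_orbit_rotate_subset)

lemma cyc_orbit_eq:
  assumes "ys \<in> cyc_orbit xs"
  shows "cyc_orbit ys = cyc_orbit xs"
proof -
  obtain k where "ys = rotate k xs" using assms by (auto simp: cyc_orbit_def)
  then show ?thesis by (simp add: cyc_orbit_rotate)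
qed

lemma card_cyc_orbit:
  assumes xs: "xs \<noteq> []" and primitive: "period xs = length xs"
  shows "card (cyc_orbit xs) = length xs"
proof -
  have orbit: "cyc_orbit xs = (\<lambda>k. rotate k xs) ` {..<length xs}"
    using xs by (auto simp: cyc_orbit_def image_iff intro: exI[of _ "_ mod length xs"] rotate_conv_mod)
  have "inj_on (\<lambda>k. rotate k xs) {..<length xs}"
  proof (rule linorder_inj_onI')
    fix i j assume ij: "i \<in> {..<length xs}" "j \<in> {..<length xs}" "i < j"
    have "\<not> length xs dvd j - i" using ij by (auto dest: dvd_imp_le)
    then have "rotate (j - i) xs \<noteq> xs"
      using rotate_eq_self_iff_period_dvd[OF xs] primitive by simp
    then have "rotate i (rotate (j - i) xs) \<noteq> rotate i xs"
      by (simp add: inj_eq[OF inj_rotate])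
    then show "rotate i xs \<noteq> rotate j xs" using ij by (simp add: rotate_rotate)
  qed
  then show ?thesis by (simp add: orbit card_image)
qed

section \<open>Antiperiodic strings\<close>

lemma Bstr_iff_rotate:
  "b \<in> Bstr g \<longleftrightarrow> length b = 2 * g \<and> rotate g b = map Not b"
proof (cases "length b = 2 * g")
  case True
  have "rotate g b ! i = b ! (i + g)" if "i < g" for i
    using that True by (simp add: nth_rotate add.commute)
  moreover have "rotate g b ! (i + g) = b ! i" if "i < g" for i
    using that True by (simp add: nth_rotate mod_if)
  ultimately have "(\<forall>i<2 * g. rotate g b ! i = (\<not> b ! i)) \<longleftrightarrow> (\<forall>i<g. b ! i \<noteq> b ! (i + g))"
    by (metis add.commute add_less_cancel_left less_diff_conv mult_2 not_less le_add_diff_inverse2)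
  then show ?thesis
    using True by (auto simp: Bstr_def list_eq_iff_nth_eq)
qed (simp add: Bstr_def)

lemma rotate_in_Bstr: "b \<in> Bstr g \<Longrightarrow> rotate k b \<in> Bstr g"
  unfolding Bstr_iff_rotate by (metis length_rotate rotate_rotate add.commute rotate_map)

lemma finite_Bstr: "finite (Bstr g)"
  using finite_lists_length_eq[of "UNIV :: bool set" "2 * g"]
  by (rule rev_finite_subset) (auto simp: Bstr_def)

definition antiperiodic_extension :: "nat \<Rightarrow> nat \<Rightarrow> bool list \<Rightarrow> bool list" where
  "antiperiodic_extension h n x = map (\<lambda>i. x ! (i mod h) \<noteq> odd (i div h)) [0..<n]"

lemma odd_mod_div_iff:
  fixes x h n :: nat
  assumes "2 * h dvd n"
  shows "odd (x mod n div h) \<longleftrightarrow> odd (x div h)"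
proof -
  from assms obtain c where n: "n = 2 * h * c" by (rule dvdE)
  have "x div h = x mod n div h + 2 * (c * (x div n))"
  proof (cases "h = 0")
    case False
    have "n * (x div n) = h * (2 * c * (x div n))" by (simp add: n ac_simps)
    then have "x = x mod n + h * (2 * c * (x div n))" using mod_mult_div_eq[of x n] by linarith
    then have "x div h = (x mod n + h * (2 * c * (x div n))) div h" by (rule arg_cong)
    also have "\<dots> = 2 * c * (x div n) + x mod n div h" using False by (rule div_mult_self2)
    finally show ?thesis by simp
  qed (simp add: n)
  then show ?thesis by simp
qed

lemma rotate_antiperiodic_extension:
  assumes h: "0 < h" and n: "2 * h dvd n"
  shows "rotate h (antiperiodic_extension h n x) = map Not (antiperiodic_extension h n x)"
proof (rule nth_equalityI)
  fix i assume "i < length (rotate h (antiperiodic_extension h n x))"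
  then have i: "i < n" by (simp add: antiperiodic_extension_def)
  have "(h + i) mod n mod h = i mod h"
    using n by (simp add: mod_mod_cancel dvd_mult_right)
  moreover have "even ((h + i) mod n div h) \<longleftrightarrow> odd (i div h)"
  proof -
    have "(h + i) div h = Suc (i div h)" using h by simp
    then show ?thesis using odd_mod_div_iff[OF n, of "h + i"] by auto
  qed
  ultimately show "rotate h (antiperiodic_extension h n x) ! i = map Not (antiperiodic_extension h n x) ! i"
    using i by (simp add: antiperiodic_extension_def nth_rotate)
qed (simp add: antiperiodic_extension_def)

lemma take_antiperiodic_extension:
  "length x = h \<Longrightarrow> h \<le> n \<Longrightarrow> take h (antiperiodic_extension h n x) = x"
  by (intro nth_equalityI) (auto simp: antiperiodic_extension_def)

lemma antiperiodic_eq_extension: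
  assumes h: "0 < h" "h \<le> length b" and b: "rotate h b = map Not b"
  shows "b = antiperiodic_extension h (length b) (take h b)"
proof -
  have shift: "b ! (i + h) = (\<not> b ! i)" if "i + h < length b" for i
  proof -
    have "rotate h b ! i = b ! (i + h)" using that by (simp add: nth_rotate add.commute)
    with b that show ?thesis by (metis add_lessD1 nth_map)
  qed
  have "b ! i = (b ! (i mod h) \<noteq> odd (i div h))" if "i < length b" for i
    using that
  proof (induction i rule: less_induct)
    case (less i)
    show ?case
    proof (cases "i < h")
      case False
      then have "i = (i - h) + h" "i div h = Suc ((i - h) div h)" "i mod h = (i - h) mod h"
        using h by (simp_all add: le_div_geq le_mod_geq)
      then show ?thesis
        using less.IH[of "i - h"] shift[of "i - h"] less.prems h by simp
    qed simp
  qed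
  then show ?thesis
    using h by (intro nth_equalityI) (auto simp: antiperiodic_extension_def)
qed

lemma card_antiperiodic:
  assumes h: "0 < h" and n: "0 < n" "2 * h dvd n"
  shows "card {b :: bool list. length b = n \<and> rotate h b = map Not b} = 2 ^ h"
proof -
  have "h \<le> n" using n by (auto dest: dvd_imp_le)
  have "{b :: bool list. length b = n \<and> rotate h b = map Not b}
      = antiperiodic_extension h n ` {x. length x = h}"
  proof (intro equalityI subsetI)
    fix b assume "b \<in> {b :: bool list. length b = n \<and> rotate h b = map Not b}"
    then show "b \<in> antiperiodic_extension h n ` {x. length x = h}"
      using antiperiodic_eq_extension[OF h] \<open>h \<le> n\<close> by (intro image_eqI[of _ _ "take h b"]) auto
  next
    fix b assume "b \<in> antiperiodic_extension h n ` {x. length x = h}"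
    then obtain x where "b = antiperiodic_extension h n x" by blast
    then show "b \<in> {b :: bool list. length b = n \<and> rotate h b = map Not b}"
      using rotate_antiperiodic_extension[OF h n(2), of x] by (simp add: antiperiodic_extension_def)
  qed
  moreover have "inj_on (antiperiodic_extension h n) {x. length x = h}"
    using take_antiperiodic_extension \<open>h \<le> n\<close> by (intro inj_on_inverseI[of _ "take h"]) auto
  ultimately show ?thesis
    using card_lists_length_eq[of "UNIV :: bool set" h] by (simp add: card_image)
qed

lemma Bstr_not_fixed:
  assumes b: "b \<in> Bstr g" and g: "0 < g" and k: "k dvd g"
  shows "rotate k b \<noteq> b"
proof
  assume "rotate k b = b"
  then have "rotate g b = b" using k by (auto elim!: dvdE intro: rotate_mult_fixed simp: mult.commute)
  then have "map Not b = b" using b by (simp add: Bstr_iff_rotate)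
  moreover have "b \<noteq> []" using b g by (auto simp: Bstr_def)
  ultimately show False by (metis list.map_sel(1))
qed

lemma Bstr_fixed_eq_antiperiodic:
  assumes g: "g = d * h" and d: "odd d"
  shows "{b \<in> Bstr g. rotate (2 * h) b = b} = {b. length b = 2 * g \<and> rotate h b = map Not b}"
proof -
  obtain q where "d = 2 * q + 1" using d by (rule oddE)
  then have g_eq: "g = q * (2 * h) + h" using g by (simp add: algebra_simps)
  have "rotate g b = rotate h b" if "rotate (2 * h) b = b" for b :: "bool list"
    using rotate_mult_fixed[OF that, of q] by (metis g_eq rotate_rotate add.commute)
  moreover have "rotate (2 * h) b = b" if "rotate h b = map Not b" for b :: "bool list"
    using that by (simp add: mult_2 rotate_rotate[symmetric] rotate_map comp_def)
  ultimately show ?thesis by (auto simp: Bstr_iff_rotate)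
qed

lemma card_Bstr_fixed:
  assumes g: "0 < g" and d: "d dvd 2 * g"
  shows "card {b \<in> Bstr g. rotate (2 * g div d) b = b} = (if odd d then 2 ^ (g div d) else 0)"
proof (cases "odd d")
  case False
  then obtain e where "d = 2 * e" by blast
  then have "2 * g div d dvd g" using d by (auto elim!: dvdE)
  then have "{b \<in> Bstr g. rotate (2 * g div d) b = b} = {}"
    using Bstr_not_fixed[OF _ g] by blast
  then show ?thesis using False by (simp only: card.empty if_False)
next
  case True
  then have "d dvd g" using d by (simp add: coprime_dvd_mult_right_iff)
  then obtain h where h: "g = d * h" by blast
  have "0 < d" "0 < h" using h g by auto
  then have "2 * g div d = 2 * h" "g div d = h" using h by simp_all
  moreover have "2 * h dvd 2 * g" using h by simp
  ultimately show ?thesis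
    using True g \<open>0 < h\<close> Bstr_fixed_eq_antiperiodic[OF h True] card_antiperiodic by simp
qed

section \<open>Counting strings and orbits\<close>

lemma card_Bstr_fixed_eq_sum_periods:
  assumes g: "0 < g" and k: "0 < k"
  shows "card {b \<in> Bstr g. rotate k b = b} = (\<Sum>p\<in>{p. p dvd k}. card {b \<in> Bstr g. period b = p})"
proof -
  define S where "S = {b \<in> Bstr g. rotate k b = b}"
  have "rotate k b = b \<longleftrightarrow> period b dvd k" if "b \<in> Bstr g" for b
    using that g by (intro rotate_eq_self_iff_period_dvd) (auto simp: Bstr_def)
  then have S: "S = {b \<in> Bstr g. period b dvd k}" by (auto simp: S_def)
  have "card S = (\<Sum>p\<in>{p. p dvd k}. card {b \<in> S. period b = p})"
    unfolding card_eq_sum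
    by (rule sum.group[symmetric]) (use k finite_Bstr in \<open>auto simp: S\<close>)
  also have "\<dots> = (\<Sum>p\<in>{p. p dvd k}. card {b \<in> Bstr g. period b = p})"
    by (intro sum.cong refl arg_cong[where f = card]) (auto simp: S)
  finally show ?thesis by (simp add: S_def)
qed

lemma Pcount_eq_sum_moebius:
  assumes g: "0 < g"
  shows "real (Pcount g) = (\<Sum>x\<in>{x. x dvd g \<and> odd x}. real_of_int (moebius x) * 2 ^ (g div x))"
proof -
  define N where "N p = real (card {b \<in> Bstr g. period b = p})" for p
  define F where "F k = real (card {b \<in> Bstr g. rotate k b = b})" for k
  have "F k = (\<Sum>e\<in>{e. e dvd k}. N e)" if "k dvd 2 * g" for k
  proof -
    have "0 < k" using dvd_pos_nat[of "2 * g" k] that g by simp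
    then show ?thesis by (simp add: N_def F_def card_Bstr_fixed_eq_sum_periods[OF g])
  qed
  then have "N (2 * g) = (\<Sum>d\<in>{d. d dvd 2 * g}. of_int (moebius d) * F (2 * g div d))"
    using g by (intro moebius_inversion) auto
  also have "\<dots> = (\<Sum>d\<in>{d. d dvd 2 * g}. if odd d then of_int (moebius d) * 2 ^ (g div d) else 0)"
    using g by (intro sum.cong refl) (simp add: F_def card_Bstr_fixed)
  also have "\<dots> = (\<Sum>d\<in>{d. d dvd 2 * g \<and> odd d}. of_int (moebius d) * 2 ^ (g div d))"
    using g by (simp add: sum.inter_filter[symmetric])
  also have "{d. d dvd 2 * g \<and> odd d} = {x. x dvd g \<and> odd x}"
    by (auto simp: coprime_dvd_mult_right_iff)
  finally show ?thesis by (simp add: N_def Pcount_def)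
qed

lemma card_Eprime:
  assumes g: "0 < g"
  shows "2 * g * card (Eprime g) = Pcount g"
proof -
  define S where "S = {b \<in> Bstr g. period b = 2 * g}"
  have E: "Eprime g = cyc_orbit ` S" by (auto simp: Eprime_def S_def)
  have "cyc_orbit b \<subseteq> S" if "b \<in> S" for b
    using that by (auto simp: S_def cyc_orbit_def rotate_in_Bstr period_rotate)
  then have U: "\<Union> (Eprime g) = S" using self_in_cyc_orbit by (auto simp: E)
  have "2 * g * card (Eprime g) = card (\<Union> (Eprime g))"
  proof (rule card_partition)
    show "finite (Eprime g)" using finite_Bstr by (simp add: E S_def)
    show "finite (\<Union> (Eprime g))" using finite_Bstr by (simp add: U S_def)
  next
    fix c assume "c \<in> Eprime g"
    then obtain b where b: "b \<in> S" "c = cyc_orbit b" by (auto simp: E)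
    then have "length b = 2 * g" "period b = 2 * g" by (auto simp: S_def Bstr_def)
    moreover from this have "b \<noteq> []" using g by auto
    ultimately show "card c = 2 * g" using card_cyc_orbit[of b] b(2) by simp
  next
    fix c1 c2 assume "c1 \<in> Eprime g" "c2 \<in> Eprime g" "c1 \<noteq> c2"
    then obtain b1 b2 where "c1 = cyc_orbit b1" "c2 = cyc_orbit b2" "c1 \<noteq> c2" by (auto simp: E)
    then show "c1 \<inter> c2 = {}" by (metis cyc_orbit_eq disjoint_iff)
  qed
  then show ?thesis by (simp add: U S_def Pcount_def)
qed

theorem mainTheorem2:
  fixes g :: nat
  assumes "g \<ge> 1"
  shows "real (card (Eprime g)) = real (Pcount g) / real (2 * g)
       \<and> real (Pcount g) / real (2 * g)
           = (1 / real (2 * g)) * (\<Sum>x\<in>{x. x dvd g \<and> odd x}. real_of_int (moebius x) * 2 ^ (g div x))"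
proof -
  have g: "0 < g" using assms by simp
  have "real (2 * g) * real (card (Eprime g)) = real (Pcount g)"
    using card_Eprime[OF g] by (metis of_nat_mult)
  then show ?thesis using g Pcount_eq_sum_moebius[OF g] by (auto simp: field_simps)
qed

end
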